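(* Fix $n\ge 3$, and let $a_0,\dots,a_{n-1}$ be regular closed subsets of $\mathbb{R}^2$ such that for all $0\le i<n$, $a_i\neq\emptyset$ and $\mathrm{int}(a_i\cup a_{[i+1]})$ is connected, and $a_i\cdot a_j=\emptyset$ for all $0\le i<j<n$. Then there exist Jordan arcs $\alpha_0,\dots,\alpha_{n-1}$ and points $p_0,\dots,p_{n-1}$ such that: for all $0\le i<n$, $\alpha_i$ is a Jordan arc from $p_i$ to $p_{[i+1]}$ with $\alpha_i\subseteq\mathrm{int}(a_i\cup a_{[i+1]})$; the concatenation $\alpha_0\cdots\alpha_{n-1}$ is a Jordan curve lying in $\mathrm{int}(a_0\cup\dots\cup a_{n-1})$; and $p_i\in\mathrm{int}(a_i)$ for all $0\le i<n$.
   Context: $[k]$ denotes $k\bmod n$. $a\cdot b$ denotes $\overline{\mathrm{int}(a\cap b)}$ (the product of regular closed sets). A Jordan arc is a continuous injective map from $[0,1]$ to $\mathbb{R}^2$ (or a constant map, a degenerate arc), identified with its image; a Jordan curve is a continuous injective map from the circle to $\mathbb{R}^2$. The concatenation $\alpha_0\cdots\alpha_{n-1}$ being a Jordan curve means each $\alpha_i$ ends where $\alpha_{[i+1]}$ begins and the union of the arcs, traversed in order, is a Jordan curve. *)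

theory Defs
  imports "HOL-Analysis.Analysis"
begin

definition regular_closed :: "'a::topological_space set \<Rightarrow> bool" where
  "regular_closed S \<longleftrightarrow> S = closure (interior S)"

definition rc_prod :: "'a::topological_space set \<Rightarrow> 'a set \<Rightarrow> 'a set" where
  "rc_prod a b = closure (interior (a \<inter> b))"

definition jordan_arc :: "(real \<Rightarrow> 'a::topological_space) \<Rightarrow> bool" where
  "jordan_arc g \<longleftrightarrow> path g \<and> (inj_on g {0..1} \<or> (\<forall>t\<in>{0..1}. g t = g 0))"

fun path_concat :: "(real \<Rightarrow> 'a::real_normed_vector) list \<Rightarrow> real \<Rightarrow> 'a" where
  "path_concat [] = (\<lambda>t. 0)"
| "path_concat [g] = g"
| "path_concat (g # gs) = g +++ path_concat gs"

end

theory Submission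
  imports Defs
begin

text \<open>
  Let \<open>link i = int (a i \<union> a (i+1))\<close>, indices modulo \<open>n\<close>. As the \<open>a i\<close> are regular closed
  and distinct ones meet in sets with empty interior, \<open>link i \<inter> link (i+1) = int (a (i+1))\<close>,
  non-consecutive links are disjoint, and \<open>int (a (i+1))\<close> misses \<open>link (i+2)\<close>. Arcs
  \<open>\<beta> i\<close> in the connected open sets \<open>link i\<close> joining points \<open>p i \<in> int (a i)\<close> therefore form a
  closed chain in which only consecutive arcs meet and no point lies on three consecutive
  arcs. Such a chain is trimmed greedily to a Jordan curve: follow \<open>\<beta> 0\<close> until it first meets
  \<open>\<beta> 1\<close>, follow \<open>\<beta> 1\<close> from there until it first meets \<open>\<beta> 2\<close>, and so on; stop the last arc
  where it first meets the part of \<open>\<beta> 0\<close> already used, and restart the first arc at that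
  point. Each switching point lies on two consecutive arcs \<open>\<beta> i\<close>, \<open>\<beta> (i+1)\<close>, hence in
  \<open>int (a (i+1))\<close>.
\<close>

lemma add_one_mod_neq:
  fixes i n :: nat
  assumes "2 \<le> n" "i < n"
  shows "(i + 1) mod n \<noteq> i"
  using assms by (cases "i + 1 = n") auto

lemma add_two_mod_neq:
  fixes i n :: nat
  assumes "3 \<le> n" "i < n"
  shows "(i + 2) mod n \<noteq> i"
  using assms by (cases "i + 2 < n"; cases "i + 1 = n") (auto simp: mod_if)

lemma add_one_mod_inj:
  fixes i j n :: nat
  assumes "i < n" "j < n" "(i + 1) mod n = (j + 1) mod n"
  shows "i = j"
  using assms by (cases "i + 1 < n"; cases "j + 1 < n") (auto simp: mod_if split: if_splits)

lemma add_one_mod_surj: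
  fixes j n :: nat
  assumes "j < n"
  obtains i where "i < n" "(i + 1) mod n = j"
proof (cases j)
  case 0
  then show ?thesis using assms by (intro that[of "n - 1"]) auto
next
  case (Suc k)
  then show ?thesis using assms by (intro that[of k]) auto
qed

lemma regular_closed_closed: "regular_closed S \<Longrightarrow> closed S"
  unfolding regular_closed_def by (metis closed_closure)

lemma open_Int_regular_closed_eq_empty:
  assumes "regular_closed A" "open W" "W \<inter> interior A = {}"
  shows "W \<inter> A = {}"
  using assms open_Int_closure_eq_empty unfolding regular_closed_def by metis

lemma interior_Un_Int_interior_Un:
  assumes "closed B" "interior (A \<inter> C) = {}"
  shows "interior (A \<union> B) \<inter> interior (B \<union> C) = interior B"
proof -
  have "interior (A \<union> B) \<inter> interior (B \<union> C) = interior (B \<union> A \<inter> C)"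
    by (metis interior_Int Un_Int_distrib Un_commute)
  also have "\<dots> = interior B"
    using assms by (rule interior_closed_Un_empty_interior)
  finally show ?thesis .
qed

lemma open_Int_interior_Un_eq_empty:
  assumes "regular_closed A" "regular_closed B" "open W"
    and "W \<inter> interior A = {}" "W \<inter> interior B = {}"
  shows "W \<inter> interior (A \<union> B) = {}"
  using open_Int_regular_closed_eq_empty[OF assms(1,3,4)]
    open_Int_regular_closed_eq_empty[OF assms(2,3,5)] interior_subset
  by blast

definition first_hit :: "(real \<Rightarrow> 'a::topological_space) \<Rightarrow> 'a set \<Rightarrow> real \<Rightarrow> real" where
  "first_hit g K s = Inf {t \<in> {s..1}. g t \<in> K}"

lemma first_hit:
  assumes "path g" "closed K" "0 \<le> s" "u \<in> {s..1}" "g u \<in> K"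
  shows "first_hit g K s \<in> {s..u}" "g (first_hit g K s) \<in> K"
    and "\<And>v. s \<le> v \<Longrightarrow> v < first_hit g K s \<Longrightarrow> g v \<notin> K"
proof -
  let ?T = "{t \<in> {s..1}. g t \<in> K}"
  have "continuous_on {s..1} g"
    using assms(1,3) continuous_on_subset unfolding path_def by fastforce
  then have "closed ({s..1} \<inter> g -` K)"
    using assms(2) by (simp add: continuous_closed_preimage)
  moreover have "?T = {s..1} \<inter> g -` K" by auto
  ultimately have "Inf ?T \<in> ?T"
    using assms(4,5) by (intro closed_contains_Inf) (auto simp: bdd_below_def)
  moreover have "Inf ?T \<le> t" if "t \<in> ?T" for t
    using that by (intro cInf_lower) (auto simp: bdd_below_def)
  ultimately show "first_hit g K s \<in> {s..u}" "g (first_hit g K s) \<in> K"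
    and "\<And>v. s \<le> v \<Longrightarrow> v < first_hit g K s \<Longrightarrow> g v \<notin> K"
    using assms(4,5) unfolding first_hit_def by force+
qed

lemma arc_path_concat_upt:
  fixes \<alpha> :: "nat \<Rightarrow> real \<Rightarrow> 'a::real_normed_vector"
  assumes "i < j"
    and "\<And>k. i \<le> k \<Longrightarrow> k < j \<Longrightarrow> arc (\<alpha> k)"
    and "\<And>k. i \<le> k \<Longrightarrow> Suc k < j \<Longrightarrow> pathfinish (\<alpha> k) = pathstart (\<alpha> (Suc k))"
    and "\<And>k. i \<le> k \<Longrightarrow> Suc k < j \<Longrightarrow>
        path_image (\<alpha> k) \<inter> path_image (\<alpha> (Suc k)) \<subseteq> {pathstart (\<alpha> (Suc k))}"
    and "\<And>k l. i \<le> k \<Longrightarrow> Suc k < l \<Longrightarrow> l < j \<Longrightarrow>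
        path_image (\<alpha> k) \<inter> path_image (\<alpha> l) = {}"
  shows "arc (path_concat (map \<alpha> [i..<j])) \<and>
    pathstart (path_concat (map \<alpha> [i..<j])) = pathstart (\<alpha> i) \<and>
    pathfinish (path_concat (map \<alpha> [i..<j])) = pathfinish (\<alpha> (j - 1)) \<and>
    path_image (path_concat (map \<alpha> [i..<j])) = (\<Union>k\<in>{i..<j}. path_image (\<alpha> k))"
  using assms
proof (induction "j - i" arbitrary: i)
  case 0
  then show ?case by simp
next
  case (Suc d)
  show ?case
  proof (cases "Suc i < j")
    case False
    with Suc.prems have "[i..<j] = [i]" "j - 1 = i" "{i..<j} = {i}" by (auto simp: upt_rec)
    then show ?thesis using Suc.prems(1,2) by simp
  next
    case True
    let ?r = "path_concat (map \<alpha> [Suc i..<j])"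
    have r: "arc ?r" "pathstart ?r = pathstart (\<alpha> (Suc i))" "pathfinish ?r = pathfinish (\<alpha> (j - 1))"
      "path_image ?r = (\<Union>k\<in>{Suc i..<j}. path_image (\<alpha> k))"
      using Suc.hyps(1)[of "Suc i"] Suc.hyps(2) Suc.prems True by auto
    have concat: "path_concat (map \<alpha> [i..<j]) = \<alpha> i +++ ?r"
      using True by (simp add: upt_rec)
    have "path_image (\<alpha> i) \<inter> path_image ?r \<subseteq> {pathstart ?r}"
    proof
      fix x assume x: "x \<in> path_image (\<alpha> i) \<inter> path_image ?r"
      then obtain k where "k \<in> {Suc i..<j}" "x \<in> path_image (\<alpha> k)" using r(4) by blast
      then show "x \<in> {pathstart ?r}"
        using x r(2) Suc.prems(4)[of i] Suc.prems(5)[of i k] True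
        by (cases "k = Suc i") auto
    qed
    then have "arc (\<alpha> i +++ ?r)"
      using Suc.prems(2-3) True r by (intro arc_join) auto
    moreover have "{i..<j} = insert i {Suc i..<j}" using True by auto
    ultimately show ?thesis
      using concat r Suc.prems(3)[of i] True by (simp add: path_image_join)
  qed
qed

lemma simple_loop_path_concat:
  fixes \<alpha> :: "nat \<Rightarrow> real \<Rightarrow> 'a::real_normed_vector"
  assumes "2 \<le> n"
    and arcs: "\<And>i. i < n \<Longrightarrow> arc (\<alpha> i)"
    and joins: "\<And>i. i < n \<Longrightarrow> pathfinish (\<alpha> i) = pathstart (\<alpha> ((i + 1) mod n))"
    and adjacent: "\<And>i. i < n \<Longrightarrow>
        path_image (\<alpha> i) \<inter> path_image (\<alpha> ((i + 1) mod n)) \<subseteq> {pathfinish (\<alpha> i)}"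
    and distant: "\<And>i j. i < n \<Longrightarrow> j < n \<Longrightarrow> i \<noteq> j \<Longrightarrow> j \<noteq> (i + 1) mod n \<Longrightarrow>
        i \<noteq> (j + 1) mod n \<Longrightarrow> path_image (\<alpha> i) \<inter> path_image (\<alpha> j) = {}"
  shows "simple_path (path_concat (map \<alpha> [0..<n]))"
    and "pathfinish (path_concat (map \<alpha> [0..<n])) = pathstart (path_concat (map \<alpha> [0..<n]))"
    and "path_image (path_concat (map \<alpha> [0..<n])) = (\<Union>i<n. path_image (\<alpha> i))"
proof -
  let ?r = "path_concat (map \<alpha> [1..<n])"
  have joins': "pathfinish (\<alpha> k) = pathstart (\<alpha> (Suc k))" if "Suc k < n" for k
    using joins[of k] that by simp
  have adjacent': "path_image (\<alpha> k) \<inter> path_image (\<alpha> (Suc k)) \<subseteq> {pathstart (\<alpha> (Suc k))}"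
    if "Suc k < n" for k
    using adjacent[of k] joins'[OF that] that by simp
  have distant': "path_image (\<alpha> k) \<inter> path_image (\<alpha> l) = {}" if "1 \<le> k" "Suc k < l" "l < n" for k l
    using that distant[of k l] by (cases "Suc l = n") auto
  have "arc ?r \<and> pathstart ?r = pathstart (\<alpha> 1) \<and> pathfinish ?r = pathfinish (\<alpha> (n - 1)) \<and>
      path_image ?r = (\<Union>k\<in>{1..<n}. path_image (\<alpha> k))"
    using \<open>2 \<le> n\<close> arcs joins' adjacent' distant' by (intro arc_path_concat_upt) auto
  then have r: "arc ?r" "pathstart ?r = pathstart (\<alpha> 1)" "pathfinish ?r = pathfinish (\<alpha> (n - 1))"
      "path_image ?r = (\<Union>k\<in>{1..<n}. path_image (\<alpha> k))"
    by simp_all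
  have concat: "path_concat (map \<alpha> [0..<n]) = \<alpha> 0 +++ ?r"
    using \<open>2 \<le> n\<close> by (simp add: upt_rec)
  have closes: "pathfinish ?r = pathstart (\<alpha> 0)"
    using r(3) joins[of "n - 1"] \<open>2 \<le> n\<close> by simp
  have "path_image (\<alpha> 0) \<inter> path_image ?r \<subseteq> {pathstart (\<alpha> 0), pathstart ?r}"
  proof
    fix x assume x: "x \<in> path_image (\<alpha> 0) \<inter> path_image ?r"
    then obtain k where k: "k \<in> {1..<n}" "x \<in> path_image (\<alpha> k)" using r(4) by blast
    consider "k = 1" | "k = n - 1" | "1 < k" "k < n - 1" using k(1) by fastforce
    then show "x \<in> {pathstart (\<alpha> 0), pathstart ?r}"
    proof cases
      case 1
      then show ?thesis using x k adjacent'[of 0] r(2) \<open>2 \<le> n\<close> by auto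
    next
      case 2
      then show ?thesis using x k adjacent[of "n - 1"] joins[of "n - 1"] \<open>2 \<le> n\<close> by auto
    next
      case 3
      then show ?thesis using x k distant[of 0 k] by auto
    qed
  qed
  then show "simple_path (path_concat (map \<alpha> [0..<n]))"
    unfolding concat using arcs[of 0] r joins'[of 0] closes \<open>2 \<le> n\<close>
    by (intro simple_path_join_loop) auto
  show "pathfinish (path_concat (map \<alpha> [0..<n])) = pathstart (path_concat (map \<alpha> [0..<n]))"
    unfolding concat using closes by simp
  have "{..<n} = insert 0 {1..<n}" using \<open>2 \<le> n\<close> by auto
  then show "path_image (path_concat (map \<alpha> [0..<n])) = (\<Union>i<n. path_image (\<alpha> i))"
    unfolding concat using r joins'[of 0] \<open>2 \<le> n\<close> by (simp add: path_image_join)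
qed

lemma subpaths_cycle:
  fixes \<beta> :: "nat \<Rightarrow> real \<Rightarrow> 'a::real_normed_vector" and b e :: "nat \<Rightarrow> real"
  defines "\<alpha> \<equiv> \<lambda>i. subpath (b i) (e i) (\<beta> i)"
  assumes arcs: "\<And>i. i < n \<Longrightarrow> arc (\<beta> i)"
    and times: "\<And>i. i < n \<Longrightarrow> 0 \<le> b i \<and> b i < e i \<and> e i \<le> 1"
    and joins: "\<And>i. i < n \<Longrightarrow> \<beta> i (e i) = \<beta> ((i + 1) mod n) (b ((i + 1) mod n))"
    and avoid: "\<And>i u. i < n \<Longrightarrow> b i \<le> u \<Longrightarrow> u < e i \<Longrightarrow>
        \<beta> i u \<notin> \<beta> ((i + 1) mod n) ` {b ((i + 1) mod n)..e ((i + 1) mod n)}"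
  shows "\<And>i. i < n \<Longrightarrow> arc (\<alpha> i)"
    and "\<And>i. i < n \<Longrightarrow> path_image (\<alpha> i) \<subseteq> path_image (\<beta> i)"
    and "\<And>i. i < n \<Longrightarrow> pathfinish (\<alpha> i) = pathstart (\<alpha> ((i + 1) mod n))"
    and "\<And>i. i < n \<Longrightarrow>
        path_image (\<alpha> i) \<inter> path_image (\<alpha> ((i + 1) mod n)) \<subseteq> {pathfinish (\<alpha> i)}"
proof -
  fix i assume i: "i < n"
  have image: "path_image (\<alpha> j) = \<beta> j ` {b j..e j}" if "j < n" for j
    using times[OF that] unfolding \<alpha>_def by (simp add: path_image_subpath)
  show "arc (\<alpha> i)"
    using arcs[OF i] times[OF i] unfolding \<alpha>_def by (intro arc_subpath_arc) auto
  show "path_image (\<alpha> i) \<subseteq> path_image (\<beta> i)"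
    using times[OF i] unfolding \<alpha>_def by (intro path_image_subpath_subset) auto
  show "pathfinish (\<alpha> i) = pathstart (\<alpha> ((i + 1) mod n))"
    using joins[OF i] unfolding \<alpha>_def by simp
  show "path_image (\<alpha> i) \<inter> path_image (\<alpha> ((i + 1) mod n)) \<subseteq> {pathfinish (\<alpha> i)}"
  proof
    fix x assume x: "x \<in> path_image (\<alpha> i) \<inter> path_image (\<alpha> ((i + 1) mod n))"
    then obtain u where u: "u \<in> {b i..e i}" "x = \<beta> i u" using image[OF i] by blast
    have "\<not> u < e i"
      using x u avoid[OF i, of u] image[of "(i + 1) mod n"] i by auto
    then show "x \<in> {pathfinish (\<alpha> i)}"
      using u unfolding \<alpha>_def by simp
  qed
qed

locale arc_cycle =
  fixes n :: nat and \<beta> :: "nat \<Rightarrow> real \<Rightarrow> 'a::real_normed_vector"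
  assumes two_le: "2 \<le> n"
    and arcs: "\<And>i. i < n \<Longrightarrow> arc (\<beta> i)"
    and joins: "\<And>i. i < n \<Longrightarrow> pathfinish (\<beta> i) = pathstart (\<beta> ((i + 1) mod n))"
    and no_triple_point: "\<And>i. i < n \<Longrightarrow>
        path_image (\<beta> i) \<inter> path_image (\<beta> ((i + 1) mod n)) \<inter> path_image (\<beta> ((i + 2) mod n)) = {}"
begin

text \<open>For \<open>0 < k < n - 1\<close>, the greedy walk uses \<open>\<beta> k\<close> on \<open>[entry_time k, exit_time k]\<close>;
  the first and last arcs are adjusted by \<open>closing_times\<close>.\<close>

primrec entry_time :: "nat \<Rightarrow> real" where
  "entry_time 0 = 0"
| "entry_time (Suc k) =
    inv_into {0..1} (\<beta> (Suc k)) (\<beta> k (first_hit (\<beta> k) (path_image (\<beta> (Suc k))) (entry_time k)))"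

definition exit_time :: "nat \<Rightarrow> real" where
  "exit_time k = first_hit (\<beta> k) (path_image (\<beta> (Suc k))) (entry_time k)"

lemma entry_time_Suc: "entry_time (Suc k) = inv_into {0..1} (\<beta> (Suc k)) (\<beta> k (exit_time k))"
  by (simp add: exit_time_def)

lemma exit_time_first_hit:
  assumes "Suc k < n" "entry_time k \<in> {0..1}"
  shows "exit_time k \<in> {entry_time k..1}" "\<beta> k (exit_time k) \<in> path_image (\<beta> (Suc k))"
    and "\<And>u. entry_time k \<le> u \<Longrightarrow> u < exit_time k \<Longrightarrow> \<beta> k u \<notin> path_image (\<beta> (Suc k))"
proof -
  have "\<beta> k 1 = pathstart (\<beta> (Suc k))"
    using joins[of k] assms(1) by (simp add: pathfinish_def)
  then have "\<beta> k 1 \<in> path_image (\<beta> (Suc k))" by (metis pathstart_in_path_image)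
  then show "exit_time k \<in> {entry_time k..1}" "\<beta> k (exit_time k) \<in> path_image (\<beta> (Suc k))"
    and "\<And>u. entry_time k \<le> u \<Longrightarrow> u < exit_time k \<Longrightarrow> \<beta> k u \<notin> path_image (\<beta> (Suc k))"
    using first_hit[of "\<beta> k" "path_image (\<beta> (Suc k))" "entry_time k" 1] assms arcs[of k] arcs[of "Suc k"]
    unfolding exit_time_def by (auto simp: arc_imp_path closed_path_image)
qed

lemma entry_time_Suc_point:
  assumes "Suc k < n" "entry_time k \<in> {0..1}"
  shows "entry_time (Suc k) \<in> {0..1}" "\<beta> (Suc k) (entry_time (Suc k)) = \<beta> k (exit_time k)"
  using exit_time_first_hit(2)[OF assms] inv_into_into[of "\<beta> k (exit_time k)" "\<beta> (Suc k)" "{0..1}"]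
  unfolding path_image_def entry_time_Suc by (simp_all add: f_inv_into_f)

lemma entry_time:
  assumes "k < n"
  shows "entry_time k \<in> {0..1} \<and> \<beta> k (entry_time k) \<notin> path_image (\<beta> ((k + 1) mod n))"
  using assms
proof (induction k)
  case 0
  have "pathstart (\<beta> 0) = pathfinish (\<beta> (n - 1))"
    using joins[of "n - 1"] two_le by simp
  then have "\<beta> 0 0 \<in> path_image (\<beta> (n - 1)) \<inter> path_image (\<beta> 0)"
    by (metis IntI pathfinish_in_path_image pathstart_def pathstart_in_path_image)
  moreover have "(n - 1 + 2) mod n = 1"
    using two_le by (simp add: mod_Suc)
  ultimately show ?case
    using no_triple_point[of "n - 1"] two_le by auto
next
  case (Suc k)
  then have "entry_time k \<in> {0..1}" by simp
  note hit = exit_time_first_hit[OF Suc.prems this] and point = entry_time_Suc_point[OF Suc.prems this]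
  have "\<beta> k (exit_time k) \<in> path_image (\<beta> k)"
    using hit(1) Suc.IH Suc.prems unfolding path_image_def by auto
  then show ?case
    using no_triple_point[of k] hit(2) point Suc.prems by auto
qed

lemma exit_time:
  assumes "Suc k < n"
  shows "entry_time k < exit_time k" "exit_time k \<le> 1"
    and "\<beta> k (exit_time k) = \<beta> (Suc k) (entry_time (Suc k))"
    and "\<And>u. entry_time k \<le> u \<Longrightarrow> u < exit_time k \<Longrightarrow> \<beta> k u \<notin> path_image (\<beta> (Suc k))"
proof -
  have entry: "entry_time k \<in> {0..1}" "\<beta> k (entry_time k) \<notin> path_image (\<beta> (Suc k))"
    using entry_time[of k] assms by auto
  note hit = exit_time_first_hit[OF assms entry(1)]
  have "exit_time k \<noteq> entry_time k"
    using hit(2) entry(2) by auto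
  then show "entry_time k < exit_time k" "exit_time k \<le> 1"
    using hit(1) by auto
  show "\<beta> k (exit_time k) = \<beta> (Suc k) (entry_time (Suc k))"
    using entry_time_Suc_point[OF assms entry(1)] by simp
  show "\<And>u. entry_time k \<le> u \<Longrightarrow> u < exit_time k \<Longrightarrow> \<beta> k u \<notin> path_image (\<beta> (Suc k))"
    by (rule hit(3))
qed

lemma closing_times:
  obtains s0 c where "0 \<le> s0" "s0 < exit_time 0" "entry_time (n - 1) < c" "c \<le> 1"
    and "\<beta> (n - 1) c = \<beta> 0 s0"
    and "\<And>u. entry_time (n - 1) \<le> u \<Longrightarrow> u < c \<Longrightarrow> \<beta> (n - 1) u \<notin> \<beta> 0 ` {0..exit_time 0}"
proof -
  define m where "m = n - 1"
  define K where "K = \<beta> 0 ` {0..exit_time 0}"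
  define c where "c = first_hit (\<beta> m) K (entry_time m)"
  define s0 where "s0 = inv_into {0..exit_time 0} (\<beta> 0) (\<beta> m c)"
  have m: "m < n" "m + 1 = n" "(m + 2) mod n = 1"
    using two_le by (simp_all add: m_def mod_Suc)
  have exit0: "0 < exit_time 0" "exit_time 0 \<le> 1"
    using exit_time[of 0] two_le by auto
  have K_sub: "K \<subseteq> path_image (\<beta> 0)"
    using exit0 by (auto simp: K_def path_image_def)
  have closed: "closed K"
    using arcs[of 0] two_le exit0 unfolding K_def arc_def path_def
    by (intro compact_imp_closed compact_continuous_image) (auto intro: continuous_on_subset)
  have in_K: "\<beta> m 1 \<in> K"
    using joins[of m] m exit0 unfolding K_def pathfinish_def pathstart_def by auto
  have entry_m: "entry_time m \<in> {0..1}" "\<beta> m (entry_time m) \<notin> path_image (\<beta> 0)"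
    using entry_time[of m] m by auto
  then have "0 \<le> entry_time m" "1 \<in> {entry_time m..1}" by auto
  note hit = first_hit[OF arc_imp_path[OF arcs[OF m(1)]] closed this in_K, folded c_def]
  then have "c \<noteq> entry_time m"
    using entry_m(2) K_sub by blast
  then have c: "entry_time m < c" "c \<le> 1"
    using hit(1) by auto
  have s0: "s0 \<in> {0..exit_time 0}" "\<beta> 0 s0 = \<beta> m c"
    using hit(2) inv_into_into[of "\<beta> m c" "\<beta> 0" "{0..exit_time 0}"]
    unfolding K_def s0_def by (simp_all add: f_inv_into_f)
  have "\<beta> m c \<in> path_image (\<beta> m)"
    using c entry_m(1) unfolding path_image_def by auto
  then have "\<beta> 0 s0 \<notin> path_image (\<beta> 1)"
    using no_triple_point[OF m(1)] hit(2) K_sub m(2,3) s0(2) by auto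
  moreover have "\<beta> 0 (exit_time 0) \<in> path_image (\<beta> 1)"
    using exit_time_first_hit(2)[of 0] two_le by simp
  ultimately have "s0 \<noteq> exit_time 0" by auto
  then show thesis
    using that[of s0 c] s0 c hit(3) unfolding m_def K_def by auto
qed

lemma trimmed_cycle:
  obtains \<alpha> where "\<And>i. i < n \<Longrightarrow> arc (\<alpha> i)"
    and "\<And>i. i < n \<Longrightarrow> path_image (\<alpha> i) \<subseteq> path_image (\<beta> i)"
    and "\<And>i. i < n \<Longrightarrow> pathfinish (\<alpha> i) = pathstart (\<alpha> ((i + 1) mod n))"
    and "\<And>i. i < n \<Longrightarrow>
        path_image (\<alpha> i) \<inter> path_image (\<alpha> ((i + 1) mod n)) \<subseteq> {pathfinish (\<alpha> i)}"
proof -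
  define m where "m = n - 1"
  have m: "m < n" "0 < m" "m + 1 = n"
    using two_le by (simp_all add: m_def)
  obtain s0 c where s0: "0 \<le> s0" "s0 < exit_time 0" and c: "entry_time m < c" "c \<le> 1"
    and closes: "\<beta> m c = \<beta> 0 s0"
    and avoid_m: "\<And>u. entry_time m \<le> u \<Longrightarrow> u < c \<Longrightarrow> \<beta> m u \<notin> \<beta> 0 ` {0..exit_time 0}"
    using closing_times unfolding m_def by blast
  define b where "b i = (if i = 0 then s0 else entry_time i)" for i
  define e where "e i = (if i = m then c else exit_time i)" for i
  have times: "0 \<le> b i \<and> b i < e i \<and> e i \<le> 1" if "i < n" for i
    using that s0 c exit_time[of i] entry_time[of i] m
    unfolding b_def e_def by (auto simp: m_def)
  have joins: "\<beta> i (e i) = \<beta> ((i + 1) mod n) (b ((i + 1) mod n))" if "i < n" for i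
  proof (cases "i = m")
    case True
    then show ?thesis using closes m unfolding b_def e_def by simp
  next
    case False
    then have "Suc i < n" using that m by (simp add: m_def)
    then show ?thesis using exit_time(3)[of i] False unfolding b_def e_def by simp
  qed
  have avoid: "\<beta> i u \<notin> \<beta> ((i + 1) mod n) ` {b ((i + 1) mod n)..e ((i + 1) mod n)}"
    if "i < n" "b i \<le> u" "u < e i" for i u
  proof (cases "i = m")
    case True
    then have "\<beta> i u \<notin> \<beta> 0 ` {0..exit_time 0}" using avoid_m that m unfolding b_def e_def by simp
    moreover have "{b 0..e 0} \<subseteq> {0..exit_time 0}" using m s0 unfolding b_def e_def by auto
    ultimately show ?thesis using True m by auto
  next
    case False
    then have i: "Suc i < n" using that m by (simp add: m_def)
    have "entry_time i \<le> u" "u < exit_time i"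
      using that False s0 unfolding b_def e_def by (auto split: if_splits)
    then have "\<beta> i u \<notin> path_image (\<beta> (Suc i))" by (rule exit_time(4)[OF i])
    moreover have "\<beta> (Suc i) ` {b (Suc i)..e (Suc i)} \<subseteq> path_image (\<beta> (Suc i))"
      using times[OF i] unfolding path_image_def by auto
    ultimately show ?thesis using i by auto
  qed
  show thesis
    by (rule that[OF subpaths_cycle[of n \<beta> b e, OF arcs times joins avoid]])
qed

end

locale regular_closed_cycle =
  fixes n :: nat and a :: "nat \<Rightarrow> 'a::banach set"
  assumes three_le: "3 \<le> n"
    and regular: "\<And>i. i < n \<Longrightarrow> regular_closed (a i)"
    and nonempty: "\<And>i. i < n \<Longrightarrow> a i \<noteq> {}"
    and connected_link: "\<And>i. i < n \<Longrightarrow> connected (interior (a i \<union> a ((i + 1) mod n)))"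
    and interior_Int_eq_empty: "\<And>i j. i < n \<Longrightarrow> j < n \<Longrightarrow> i \<noteq> j \<Longrightarrow> interior (a i \<inter> a j) = {}"
begin

definition link :: "nat \<Rightarrow> 'a set" where
  "link i = interior (a i \<union> a ((i + 1) mod n))"

lemma interior_nonempty: "i < n \<Longrightarrow> interior (a i) \<noteq> {}"
  using regular nonempty unfolding regular_closed_def by force

lemma link_Int_link_next:
  assumes "i < n"
  shows "link i \<inter> link ((i + 1) mod n) = interior (a ((i + 1) mod n))"
proof -
  have "interior (a i \<inter> a ((i + 2) mod n)) = {}"
    using interior_Int_eq_empty add_two_mod_neq[OF three_le assms] assms three_le by simp
  then show ?thesis
    using regular_closed_closed[OF regular, of "(i + 1) mod n"] assms
    unfolding link_def by (simp add: interior_Un_Int_interior_Un mod_Suc_eq)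
qed

lemma interior_Int_link:
  assumes "k < n" "i < n" "k \<noteq> i" "k \<noteq> (i + 1) mod n"
  shows "interior (a k) \<inter> link i = {}"
proof -
  have "interior (a k) \<inter> interior (a j) = {}" if "j < n" "k \<noteq> j" for j
    using interior_Int_eq_empty[of k j] assms(1) that unfolding interior_Int[symmetric] by simp
  then show ?thesis
    unfolding link_def using assms(2-4) regular[of i] regular[of "(i + 1) mod n"]
    by (intro open_Int_interior_Un_eq_empty) auto
qed

lemma link_Int_link:
  assumes "i < n" "j < n" "i \<noteq> j" "j \<noteq> (i + 1) mod n" "i \<noteq> (j + 1) mod n"
  shows "link i \<inter> link j = {}"
proof -
  have "(j + 1) mod n \<noteq> (i + 1) mod n"
    using add_one_mod_inj assms(1-3) by blast
  then have "link i \<inter> interior (a j) = {}" "link i \<inter> interior (a ((j + 1) mod n)) = {}"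
    using interior_Int_link[of j i] interior_Int_link[of "(j + 1) mod n" i] assms by auto
  then show ?thesis
    unfolding link_def[of j] using assms(2) regular[of j] regular[of "(j + 1) mod n"]
    by (intro open_Int_interior_Un_eq_empty) (auto simp: link_def)
qed

lemma arc_cycle_in_links:
  obtains \<beta> where "arc_cycle n \<beta>" "\<And>i. i < n \<Longrightarrow> path_image (\<beta> i) \<subseteq> link i"
proof -
  have n: "2 \<le> n" using three_le by simp
  obtain p where p: "\<And>i. i < n \<Longrightarrow> p i \<in> interior (a i)"
    using bchoice[of "{..<n}" "\<lambda>i x. x \<in> interior (a i)"] interior_nonempty by blast
  have "\<exists>g. arc g \<and> path_image g \<subseteq> link i \<and> pathstart g = p i \<and> pathfinish g = p ((i + 1) mod n)"
    if i: "i < n" for i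
  proof -
    have "path_connected (link i)"
      using connected_link[OF i] unfolding link_def by (intro connected_open_path_connected) auto
    moreover have "p i \<in> link i" "p ((i + 1) mod n) \<in> link i"
      using p[OF i] p[of "(i + 1) mod n"] i unfolding link_def by (auto intro: interior_mono[THEN subsetD])
    moreover have "p i \<noteq> p ((i + 1) mod n)"
      using p[OF i] p[of "(i + 1) mod n"] i interior_Int_eq_empty[of i "(i + 1) mod n"]
        add_one_mod_neq[OF n i] by (auto simp: interior_Int)
    ultimately show ?thesis unfolding path_connected_arcwise by blast
  qed
  then obtain \<beta> where \<beta>: "\<And>i. i < n \<Longrightarrow> arc (\<beta> i) \<and> path_image (\<beta> i) \<subseteq> link i \<and>
      pathstart (\<beta> i) = p i \<and> pathfinish (\<beta> i) = p ((i + 1) mod n)"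
    using bchoice[of "{..<n}"] by (metis lessThan_iff)
  have "path_image (\<beta> i) \<inter> path_image (\<beta> ((i + 1) mod n)) \<inter> path_image (\<beta> ((i + 2) mod n)) = {}"
    if i: "i < n" for i
  proof -
    define j where "j = (i + 1) mod n"
    have j: "j < n" "(i + 2) mod n = (j + 1) mod n"
      using i unfolding j_def by (simp_all add: mod_Suc_eq)
    have "interior (a j) \<inter> link ((j + 1) mod n) = {}"
      using add_one_mod_neq[OF n j(1)] add_two_mod_neq[OF three_le j(1)] j(1)
      by (intro interior_Int_link) (auto simp: mod_Suc_eq)
    moreover have "path_image (\<beta> i) \<inter> path_image (\<beta> j) \<subseteq> interior (a j)"
      using \<beta>[OF i] \<beta>[OF j(1)] link_Int_link_next[OF i] unfolding j_def by blast
    moreover have "path_image (\<beta> ((i + 2) mod n)) \<subseteq> link ((j + 1) mod n)"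
      using \<beta>[of "(j + 1) mod n"] j by simp
    ultimately show ?thesis
      unfolding j_def by blast
  qed
  with \<beta> n have "arc_cycle n \<beta>" by unfold_locales auto
  then show thesis by (rule that) (use \<beta> in blast)
qed

lemma link_subset_interior_Union:
  assumes "i < n"
  shows "link i \<subseteq> interior (\<Union>j<n. a j)"
proof -
  have "(i + 1) mod n < n" using assms by simp
  then show ?thesis
    unfolding link_def using assms by (intro interior_mono) blast
qed

lemma jordan_curve_through_links:
  obtains \<alpha> :: "nat \<Rightarrow> real \<Rightarrow> 'a" where "\<And>i. i < n \<Longrightarrow> arc (\<alpha> i)"
    and "\<And>i. i < n \<Longrightarrow> path_image (\<alpha> i) \<subseteq> link i"
    and "\<And>i. i < n \<Longrightarrow> pathfinish (\<alpha> i) = pathstart (\<alpha> ((i + 1) mod n))"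
    and "\<And>i. i < n \<Longrightarrow> pathstart (\<alpha> i) \<in> interior (a i)"
    and "simple_path (path_concat (map \<alpha> [0..<n]))"
    and "pathfinish (path_concat (map \<alpha> [0..<n])) = pathstart (path_concat (map \<alpha> [0..<n]))"
    and "path_image (path_concat (map \<alpha> [0..<n])) = (\<Union>i<n. path_image (\<alpha> i))"
proof -
  obtain \<beta> :: "nat \<Rightarrow> real \<Rightarrow> 'a" where cycle: "arc_cycle n \<beta>"
    and \<beta>: "\<And>i. i < n \<Longrightarrow> path_image (\<beta> i) \<subseteq> link i"
    by (rule arc_cycle_in_links) blast
  obtain \<alpha> where arcs: "\<And>i. i < n \<Longrightarrow> arc (\<alpha> i)"
    and sub: "\<And>i. i < n \<Longrightarrow> path_image (\<alpha> i) \<subseteq> path_image (\<beta> i)"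
    and joins: "\<And>i. i < n \<Longrightarrow> pathfinish (\<alpha> i) = pathstart (\<alpha> ((i + 1) mod n))"
    and adjacent: "\<And>i. i < n \<Longrightarrow>
        path_image (\<alpha> i) \<inter> path_image (\<alpha> ((i + 1) mod n)) \<subseteq> {pathfinish (\<alpha> i)}"
    by (rule arc_cycle.trimmed_cycle[OF cycle]) blast
  have \<alpha>: "path_image (\<alpha> i) \<subseteq> link i" if "i < n" for i
    using sub[OF that] \<beta>[OF that] by blast
  have "path_image (\<alpha> i) \<inter> path_image (\<alpha> j) = {}"
    if "i < n" "j < n" "i \<noteq> j" "j \<noteq> (i + 1) mod n" "i \<noteq> (j + 1) mod n" for i j
    using link_Int_link[OF that] \<alpha>[of i] \<alpha>[of j] that by blast
  note loop = simple_loop_path_concat[of n \<alpha>, OF _ arcs joins adjacent this]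
  have points: "pathstart (\<alpha> j) \<in> interior (a j)" if j: "j < n" for j
  proof -
    obtain i where i: "i < n" "(i + 1) mod n = j" using add_one_mod_surj[OF j] by blast
    then have "pathstart (\<alpha> j) \<in> link i \<inter> link ((i + 1) mod n)"
      using joins[OF i(1)] \<alpha>[of i] \<alpha>[of j] j
      by (metis IntI pathfinish_in_path_image pathstart_in_path_image subsetD)
    then show ?thesis using link_Int_link_next[OF i(1)] i(2) by blast
  qed
  show thesis
    using three_le by (intro that[OF arcs \<alpha> joins points loop]) auto
qed

end

theorem lemma5p2:
  fixes n :: nat and a :: "nat \<Rightarrow> (real^2) set"
  assumes n3: "n \<ge> 3"
    and rc: "\<And>i. i < n \<Longrightarrow> regular_closed (a i)"
    and ne: "\<And>i. i < n \<Longrightarrow> a i \<noteq> {}"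
    and conn: "\<And>i. i < n \<Longrightarrow> connected (interior (a i \<union> a ((i + 1) mod n)))"
    and disj: "\<And>i j. i < j \<Longrightarrow> j < n \<Longrightarrow> rc_prod (a i) (a j) = {}"
  shows "\<exists>(\<alpha> :: nat \<Rightarrow> real \<Rightarrow> real^2) (p :: nat \<Rightarrow> real^2).
           (\<forall>i<n. jordan_arc (\<alpha> i) \<and> pathstart (\<alpha> i) = p i
                   \<and> pathfinish (\<alpha> i) = p ((i + 1) mod n)
                   \<and> path_image (\<alpha> i) \<subseteq> interior (a i \<union> a ((i + 1) mod n)))
         \<and> simple_path (path_concat (map \<alpha> [0..<n]))
         \<and> pathfinish (path_concat (map \<alpha> [0..<n])) = pathstart (path_concat (map \<alpha> [0..<n]))
         \<and> path_image (path_concat (map \<alpha> [0..<n])) \<subseteq> interior (\<Union>i<n. a i)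
         \<and> (\<forall>i<n. p i \<in> interior (a i))"
proof -
  have "interior (a i \<inter> a j) = {}" if "i < n" "j < n" "i \<noteq> j" for i j
    using that disj[of i j] disj[of j i] unfolding rc_prod_def by (cases "i < j") (auto simp: Int_commute)
  then interpret regular_closed_cycle n a
    using n3 rc ne conn by unfold_locales
  obtain \<alpha> :: "nat \<Rightarrow> real \<Rightarrow> real^2" where arcs: "\<And>i. i < n \<Longrightarrow> arc (\<alpha> i)"
    and links: "\<And>i. i < n \<Longrightarrow> path_image (\<alpha> i) \<subseteq> link i"
    and joins: "\<And>i. i < n \<Longrightarrow> pathfinish (\<alpha> i) = pathstart (\<alpha> ((i + 1) mod n))"
    and points: "\<And>i. i < n \<Longrightarrow> pathstart (\<alpha> i) \<in> interior (a i)"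
    and loop: "simple_path (path_concat (map \<alpha> [0..<n]))"
      "pathfinish (path_concat (map \<alpha> [0..<n])) = pathstart (path_concat (map \<alpha> [0..<n]))"
      "path_image (path_concat (map \<alpha> [0..<n])) = (\<Union>i<n. path_image (\<alpha> i))"
    by (rule jordan_curve_through_links) blast
  have "path_image (path_concat (map \<alpha> [0..<n])) \<subseteq> interior (\<Union>i<n. a i)"
    unfolding loop(3) using links link_subset_interior_Union by blast
  moreover have "jordan_arc (\<alpha> i)" if "i < n" for i
    using arcs[OF that] unfolding jordan_arc_def arc_def by simp
  ultimately show ?thesis
    using loop(1,2) joins links points unfolding link_def
    by (intro exI[of _ \<alpha>] exI[of _ "\<lambda>i. pathstart (\<alpha> i)"]) auto
qed

end
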